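(* Fix $k\ge0$. Let $\mathcal G$ be a discrete groupoid acting self-similarly on a finitely aligned $(k+1)$-graph $\Lambda$, let $\Gamma=d^{-1}(\mathbb N^k\times\{0\})\subseteq\Lambda$, and let $\sigma$ be a $\mathbb T$-valued $2$-cocycle on $\Lambda\bowtie\mathcal G$ (also denoted $\sigma$ when restricted to $\Gamma\bowtie\mathcal G$). There is a unique $*$-homomorphism $\Phi:\mathcal TC^*(\Gamma\bowtie\mathcal G,\sigma)\to\mathcal TC^*(\Lambda\bowtie\mathcal G,\sigma)$ with $\Phi(t^{\Gamma\bowtie\mathcal G}_{\gamma g})=t^{\Lambda\bowtie\mathcal G}_{\gamma g}$ for all $\gamma g\in\Gamma\bowtie\mathcal G$. If $\Lambda$ is locally convex, then $\Phi$ descends to a $*$-homomorphism $\overline\Phi:C^*(\Gamma\bowtie\mathcal G,\sigma)\to C^*(\Lambda\bowtie\mathcal G,\sigma)$ with $\overline\Phi(s^{\Gamma\bowtie\mathcal G}_{\gamma g})=s^{\Lambda\bowtie\mathcal G}_{\gamma g}$.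
   Context: Categories are small, identified with morphism sets; $\mathcal C^0$ objects, $r,s$ range/source, $\mathcal C^2$ composable pairs, $c\mathcal C=\{cc'\}$, $F\mathcal C=\bigcup_{c\in F}c\mathcal C$. Left-cancellative: $ab=ac\Rightarrow b=c$; finitely aligned: $a\mathcal C\cap b\mathcal C=F\mathcal C$ for some finite $F$; independent: $a\notin a'\mathcal C$ for distinct $a,a'\in F$; for $v\in\mathcal C^0$, $F\subseteq v\mathcal C$ is exhaustive if $c\mathcal C\cap F\mathcal C\ne\emptyset$ for all $c\in v\mathcal C$. A $(k+1)$-graph is a countable small category with $d:\Lambda\to\mathbb N^{k+1}$ with unique factorisation; locally convex: for $i\ne j$, if $e\in\Lambda^{e_i}$ and $r(e)\Lambda^{e_j}\ne\emptyset$ then $s(e)\Lambda^{e_j}\ne\emptyset$. A self-similar action of a discrete groupoid $\mathcal G$ on $\Lambda$ ($\mathcal G^0=\Lambda^0$) is a matched pair: left action $g\triangleright\lambda\in\Lambda$, right action $g\triangleleft\lambda\in\mathcal G$ ($s(g)=r(\lambda)$), with $s(g\triangleright\lambda)=r(g\triangleleft\lambda)$, $g\triangleright(\lambda\mu)=(g\triangleright\lambda)((g\triangleleft\lambda)\triangleright\mu)$, $(gh)\triangleleft\lambda=(g\triangleleft(h\triangleright\lambda))(h\triangleleft\lambda)$ and $d(g\triangleright\lambda)=d(\lambda)$; $\Lambda\bowtie\mathcal G$ has morphisms $\lambda g$ with $\lambda g\mu h=\lambda(g\triangleright\mu)(g\triangleleft\mu)h$; $\Gamma\bowtie\mathcal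 G$ is a subcategory. A $2$-cocycle: $\sigma:\mathcal C^2\to\mathbb T$ with $\sigma(c_2,c_3)\sigma(c_1,c_2c_3)=\sigma(c_1,c_2)\sigma(c_1c_2,c_3)$, $\sigma(r(c),c)=1=\sigma(c,s(c))$. A $\sigma$-twisted representation of a finitely aligned left-cancellative $\mathcal C$: partial isometries $S_c$ with (R1) $S_{c_1}S_{c_2}=\delta_{s(c_1),r(c_2)}\sigma(c_1,c_2)S_{c_1c_2}$, (R2) $S_c^*S_c=S_{s(c)}$, (R3) $S_{c_1}S_{c_1}^*S_{c_2}S_{c_2}^*=\bigvee_{c\in F}S_cS_c^*$ for finite independent $F$ with $c_1\mathcal C\cap c_2\mathcal C=F\mathcal C$ ($=0$ if empty; $\bigvee$ = supremum of commuting projections); it is covariant if also (R4) $S_v=\bigvee_{c\in F}S_cS_c^*$ for every $v$ and finite exhaustive $F\subseteq v\mathcal C$. $\mathcal TC^*(\mathcal C,\sigma)$ (resp. $C^*(\mathcal C,\sigma)$) is generated by a universal (resp. universal covariant) $\sigma$-twisted representation $t$ (resp. $s$). *)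

theory Defs
  imports "HOL-Analysis.Analysis"
begin

class cstar_algebra = real_normed_algebra + banach +
  fixes cscale :: "complex \<Rightarrow> 'a \<Rightarrow> 'a"
    and cadj :: "'a \<Rightarrow> 'a"
  assumes cscale_of_real: "cscale (complex_of_real r) x = scaleR r x"
    and cscale_add_right: "cscale a (x + y) = cscale a x + cscale a y"
    and cscale_add_left: "cscale (a + b) x = cscale a x + cscale b x"
    and cscale_mult: "cscale (a * b) x = cscale a (cscale b x)"
    and cscale_one: "cscale 1 x = x"
    and cscale_norm: "norm (cscale a x) = cmod a * norm x"
    and cscale_mult_left: "cscale a (x * y) = cscale a x * y"
    and cscale_mult_right: "cscale a (x * y) = x * cscale a y"
    and cadj_cadj: "cadj (cadj x) = x"
    and cadj_add: "cadj (x + y) = cadj x + cadj y"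
    and cadj_cscale: "cadj (cscale a x) = cscale (cnj a) (cadj x)"
    and cadj_mult: "cadj (x * y) = cadj y * cadj x"
    and cstar_identity: "norm (cadj x * x) = (norm x)\<^sup>2"

definition star_hom :: "('a::cstar_algebra \<Rightarrow> 'b::cstar_algebra) \<Rightarrow> bool" where
  "star_hom \<pi> \<longleftrightarrow>
     (\<forall>x y. \<pi> (x + y) = \<pi> x + \<pi> y) \<and>
     (\<forall>a x. \<pi> (cscale a x) = cscale a (\<pi> x)) \<and>
     (\<forall>x y. \<pi> (x * y) = \<pi> x * \<pi> y) \<and>
     (\<forall>x. \<pi> (cadj x) = cadj (\<pi> x))"

inductive_set star_alg_gen :: "'a::cstar_algebra set \<Rightarrow> 'a set" for X where
  gen: "x \<in> X \<Longrightarrow> x \<in> star_alg_gen X"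
| add: "x \<in> star_alg_gen X \<Longrightarrow> y \<in> star_alg_gen X \<Longrightarrow> x + y \<in> star_alg_gen X"
| mult: "x \<in> star_alg_gen X \<Longrightarrow> y \<in> star_alg_gen X \<Longrightarrow> x * y \<in> star_alg_gen X"
| scale: "x \<in> star_alg_gen X \<Longrightarrow> cscale a x \<in> star_alg_gen X"
| adj: "x \<in> star_alg_gen X \<Longrightarrow> cadj x \<in> star_alg_gen X"

definition generates :: "'a::cstar_algebra set \<Rightarrow> bool" where
  "generates X \<longleftrightarrow> closure (star_alg_gen X) = UNIV"

definition projection :: "'a::cstar_algebra \<Rightarrow> bool" where
  "projection p \<longleftrightarrow> cadj p = p \<and> p * p = p"

definition partial_isometry :: "'a::cstar_algebra \<Rightarrow> bool" where
  "partial_isometry v \<longleftrightarrow> v * cadj v * v = v"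

text \<open>q is the supremum of the set P of projections (order p \<le> q iff p q = p);
 the supremum of the empty set is 0.\<close>
definition is_proj_sup :: "'a::cstar_algebra set \<Rightarrow> 'a \<Rightarrow> bool" where
  "is_proj_sup P q \<longleftrightarrow> projection q \<and> (\<forall>p\<in>P. p * q = p) \<and>
     (\<forall>r. projection r \<and> (\<forall>p\<in>P. p * r = p) \<longrightarrow> q * r = q)"

record ('o, 'm) cat =
  cat_mor :: "'m set"
  cat_obj :: "'o set"
  cat_r :: "'m \<Rightarrow> 'o"
  cat_s :: "'m \<Rightarrow> 'o"
  cat_comp :: "'m \<Rightarrow> 'm \<Rightarrow> 'm"
  cat_id :: "'o \<Rightarrow> 'm"

definition is_category :: "('o, 'm) cat \<Rightarrow> bool" where
  "is_category C \<longleftrightarrow>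
     (\<forall>v\<in>cat_obj C. cat_id C v \<in> cat_mor C \<and> cat_r C (cat_id C v) = v \<and> cat_s C (cat_id C v) = v) \<and>
     (\<forall>c\<in>cat_mor C. cat_r C c \<in> cat_obj C \<and> cat_s C c \<in> cat_obj C) \<and>
     (\<forall>a\<in>cat_mor C. \<forall>b\<in>cat_mor C. cat_s C a = cat_r C b \<longrightarrow>
        cat_comp C a b \<in> cat_mor C \<and> cat_r C (cat_comp C a b) = cat_r C a \<and>
        cat_s C (cat_comp C a b) = cat_s C b) \<and>
     (\<forall>a\<in>cat_mor C. \<forall>b\<in>cat_mor C. \<forall>c\<in>cat_mor C. cat_s C a = cat_r C b \<longrightarrow> cat_s C b = cat_r C c \<longrightarrow>
        cat_comp C (cat_comp C a b) c = cat_comp C a (cat_comp C b c)) \<and>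
     (\<forall>c\<in>cat_mor C. cat_comp C (cat_id C (cat_r C c)) c = c \<and> cat_comp C c (cat_id C (cat_s C c)) = c)"

definition is_groupoid :: "('o, 'm) cat \<Rightarrow> bool" where
  "is_groupoid G \<longleftrightarrow> is_category G \<and>
     (\<forall>g\<in>cat_mor G. \<exists>h\<in>cat_mor G. cat_s G g = cat_r G h \<and> cat_s G h = cat_r G g \<and>
        cat_comp G g h = cat_id G (cat_r G g) \<and> cat_comp G h g = cat_id G (cat_s G g))"

definition right_ideal :: "('o, 'm) cat \<Rightarrow> 'm \<Rightarrow> 'm set" where
  "right_ideal C c = {cat_comp C c c' | c'. c' \<in> cat_mor C \<and> cat_s C c = cat_r C c'}"

definition set_ideal :: "('o, 'm) cat \<Rightarrow> 'm set \<Rightarrow> 'm set" where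
  "set_ideal C F = (\<Union>c\<in>F. right_ideal C c)"

definition left_cancellative :: "('o, 'm) cat \<Rightarrow> bool" where
  "left_cancellative C \<longleftrightarrow> (\<forall>a\<in>cat_mor C. \<forall>b\<in>cat_mor C. \<forall>c\<in>cat_mor C.
     cat_s C a = cat_r C b \<longrightarrow> cat_s C a = cat_r C c \<longrightarrow> cat_comp C a b = cat_comp C a c \<longrightarrow> b = c)"

definition finitely_aligned :: "('o, 'm) cat \<Rightarrow> bool" where
  "finitely_aligned C \<longleftrightarrow> (\<forall>a\<in>cat_mor C. \<forall>b\<in>cat_mor C. \<exists>F. finite F \<and> F \<subseteq> cat_mor C \<and>
     right_ideal C a \<inter> right_ideal C b = set_ideal C F)"

definition independent :: "('o, 'm) cat \<Rightarrow> 'm set \<Rightarrow> bool" where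
  "independent C F \<longleftrightarrow> (\<forall>a\<in>F. \<forall>a'\<in>F. a \<noteq> a' \<longrightarrow> a \<notin> right_ideal C a')"

definition exhaustive :: "('o, 'm) cat \<Rightarrow> 'o \<Rightarrow> 'm set \<Rightarrow> bool" where
  "exhaustive C v F \<longleftrightarrow> F \<subseteq> right_ideal C (cat_id C v) \<and>
     (\<forall>c\<in>right_ideal C (cat_id C v). right_ideal C c \<inter> set_ideal C F \<noteq> {})"

definition two_cocycle :: "('o, 'm) cat \<Rightarrow> ('m \<Rightarrow> 'm \<Rightarrow> complex) \<Rightarrow> bool" where
  "two_cocycle C \<sigma> \<longleftrightarrow>
     (\<forall>a\<in>cat_mor C. \<forall>b\<in>cat_mor C. cat_s C a = cat_r C b \<longrightarrow> cmod (\<sigma> a b) = 1) \<and>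
     (\<forall>a\<in>cat_mor C. \<forall>b\<in>cat_mor C. \<forall>c\<in>cat_mor C. cat_s C a = cat_r C b \<longrightarrow> cat_s C b = cat_r C c \<longrightarrow>
        \<sigma> b c * \<sigma> a (cat_comp C b c) = \<sigma> a b * \<sigma> (cat_comp C a b) c) \<and>
     (\<forall>c\<in>cat_mor C. \<sigma> (cat_id C (cat_r C c)) c = 1 \<and> \<sigma> c (cat_id C (cat_s C c)) = 1)"

definition twisted_rep :: "('o, 'm) cat \<Rightarrow> ('m \<Rightarrow> 'm \<Rightarrow> complex) \<Rightarrow> ('m \<Rightarrow> 'a::cstar_algebra) \<Rightarrow> bool" where
  "twisted_rep C \<sigma> S \<longleftrightarrow>
     (\<forall>c\<in>cat_mor C. partial_isometry (S c)) \<and>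
     (\<forall>c1\<in>cat_mor C. \<forall>c2\<in>cat_mor C. S c1 * S c2 =
        (if cat_s C c1 = cat_r C c2 then cscale (\<sigma> c1 c2) (S (cat_comp C c1 c2)) else 0)) \<and>
     (\<forall>c\<in>cat_mor C. cadj (S c) * S c = S (cat_id C (cat_s C c))) \<and>
     (\<forall>c1\<in>cat_mor C. \<forall>c2\<in>cat_mor C. \<forall>F. finite F \<longrightarrow> F \<subseteq> cat_mor C \<longrightarrow> independent C F \<longrightarrow>
        right_ideal C c1 \<inter> right_ideal C c2 = set_ideal C F \<longrightarrow>
        is_proj_sup {S c * cadj (S c) | c. c \<in> F} (S c1 * cadj (S c1) * S c2 * cadj (S c2)))"

definition covariant_twisted_rep :: "('o, 'm) cat \<Rightarrow> ('m \<Rightarrow> 'm \<Rightarrow> complex) \<Rightarrow> ('m \<Rightarrow> 'a::cstar_algebra) \<Rightarrow> bool" where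
  "covariant_twisted_rep C \<sigma> S \<longleftrightarrow> twisted_rep C \<sigma> S \<and>
     (\<forall>v\<in>cat_obj C. \<forall>F. finite F \<longrightarrow> exhaustive C v F \<longrightarrow>
        is_proj_sup {S c * cadj (S c) | c. c \<in> F} (S (cat_id C v)))"

text \<open>(A, t) with A the whole type 'a is a universal sigma-twisted representation, i.e.
 A is the twisted Toeplitz algebra TC*(C, sigma) with generators t. Universality is expressed
 relative to target C*-algebras of the type 'b (HOL cannot quantify over types).\<close>
definition universal_toeplitz ::
  "'b::cstar_algebra itself \<Rightarrow> ('o, 'm) cat \<Rightarrow> ('m \<Rightarrow> 'm \<Rightarrow> complex) \<Rightarrow> ('m \<Rightarrow> 'a::cstar_algebra) \<Rightarrow> bool" where
  "universal_toeplitz _ C \<sigma> t \<longleftrightarrow> twisted_rep C \<sigma> t \<and> generates (t ` cat_mor C) \<and>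
     (\<forall>S :: 'm \<Rightarrow> 'b. twisted_rep C \<sigma> S \<longrightarrow>
        (\<exists>!\<pi> :: 'a \<Rightarrow> 'b. star_hom \<pi> \<and> (\<forall>c\<in>cat_mor C. \<pi> (t c) = S c)))"

text \<open>Same for the Cuntz--Krieger type algebra C*(C, sigma) with covariant generators s.\<close>
definition universal_covariant ::
  "'b::cstar_algebra itself \<Rightarrow> ('o, 'm) cat \<Rightarrow> ('m \<Rightarrow> 'm \<Rightarrow> complex) \<Rightarrow> ('m \<Rightarrow> 'a::cstar_algebra) \<Rightarrow> bool" where
  "universal_covariant _ C \<sigma> s \<longleftrightarrow> covariant_twisted_rep C \<sigma> s \<and> generates (s ` cat_mor C) \<and>
     (\<forall>S :: 'm \<Rightarrow> 'b. covariant_twisted_rep C \<sigma> S \<longrightarrow>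
        (\<exists>!\<pi> :: 'a \<Rightarrow> 'b. star_hom \<pi> \<and> (\<forall>c\<in>cat_mor C. \<pi> (s c) = S c)))"

text \<open>An n-graph (here n = k+1): degrees are elements of N^n, encoded as functions
 nat => nat vanishing at indices \<ge> n.\<close>
definition is_kgraph :: "nat \<Rightarrow> ('o, 'l) cat \<Rightarrow> ('l \<Rightarrow> nat \<Rightarrow> nat) \<Rightarrow> bool" where
  "is_kgraph n \<Lambda> d \<longleftrightarrow> is_category \<Lambda> \<and> countable (cat_mor \<Lambda>) \<and>
     (\<forall>lam\<in>cat_mor \<Lambda>. \<forall>i\<ge>n. d lam i = 0) \<and>
     (\<forall>lam\<in>cat_mor \<Lambda>. \<forall>\<mu>\<in>cat_mor \<Lambda>. cat_s \<Lambda> lam = cat_r \<Lambda> \<mu> \<longrightarrow>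
        d (cat_comp \<Lambda> lam \<mu>) = (\<lambda>i. d lam i + d \<mu> i)) \<and>
     (\<forall>lam\<in>cat_mor \<Lambda>. \<forall>m p. d lam = (\<lambda>i. m i + p i) \<longrightarrow>
        (\<exists>!x. fst x \<in> cat_mor \<Lambda> \<and> snd x \<in> cat_mor \<Lambda> \<and> cat_s \<Lambda> (fst x) = cat_r \<Lambda> (snd x) \<and>
              d (fst x) = m \<and> d (snd x) = p \<and> cat_comp \<Lambda> (fst x) (snd x) = lam))"

definition unit_deg :: "nat \<Rightarrow> nat \<Rightarrow> nat" where
  "unit_deg i = (\<lambda>l. if l = i then 1 else 0)"

definition locally_convex :: "nat \<Rightarrow> ('o, 'l) cat \<Rightarrow> ('l \<Rightarrow> nat \<Rightarrow> nat) \<Rightarrow> bool" where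
  "locally_convex n \<Lambda> d \<longleftrightarrow> (\<forall>i<n. \<forall>j<n. i \<noteq> j \<longrightarrow>
     (\<forall>e\<in>cat_mor \<Lambda>. d e = unit_deg i \<longrightarrow>
        (\<exists>f\<in>cat_mor \<Lambda>. cat_r \<Lambda> f = cat_r \<Lambda> e \<and> d f = unit_deg j) \<longrightarrow>
        (\<exists>f\<in>cat_mor \<Lambda>. cat_r \<Lambda> f = cat_s \<Lambda> e \<and> d f = unit_deg j)))"

text \<open>Self-similar action of the groupoid G on \<Lambda> (G^0 = \<Lambda>^0): a matched pair consisting of a
 left action act g lam = g \<triangleright> lam of G on \<Lambda> and a right action res g lam = g \<triangleleft> lam of \<Lambda> on G,
 both defined when s(g) = r(lam).\<close>
definition self_similar :: "('o, 'l) cat \<Rightarrow> ('o, 'g) cat \<Rightarrow> ('l \<Rightarrow> nat \<Rightarrow> nat) \<Rightarrow>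
    ('g \<Rightarrow> 'l \<Rightarrow> 'l) \<Rightarrow> ('g \<Rightarrow> 'l \<Rightarrow> 'g) \<Rightarrow> bool" where
  "self_similar \<Lambda> G d act res \<longleftrightarrow>
     (\<forall>g\<in>cat_mor G. \<forall>lam\<in>cat_mor \<Lambda>. cat_s G g = cat_r \<Lambda> lam \<longrightarrow>
        act g lam \<in> cat_mor \<Lambda> \<and> res g lam \<in> cat_mor G \<and>
        cat_r \<Lambda> (act g lam) = cat_r G g \<and>
        cat_s \<Lambda> (act g lam) = cat_r G (res g lam) \<and>
        cat_s G (res g lam) = cat_s \<Lambda> lam \<and>
        d (act g lam) = d lam) \<and>
     (\<forall>lam\<in>cat_mor \<Lambda>. act (cat_id G (cat_r \<Lambda> lam)) lam = lam) \<and>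
     (\<forall>g\<in>cat_mor G. res g (cat_id \<Lambda> (cat_s G g)) = g) \<and>
     (\<forall>g\<in>cat_mor G. \<forall>h\<in>cat_mor G. \<forall>lam\<in>cat_mor \<Lambda>. cat_s G g = cat_r G h \<longrightarrow> cat_s G h = cat_r \<Lambda> lam \<longrightarrow>
        act (cat_comp G g h) lam = act g (act h lam) \<and>
        res (cat_comp G g h) lam = cat_comp G (res g (act h lam)) (res h lam)) \<and>
     (\<forall>g\<in>cat_mor G. \<forall>lam\<in>cat_mor \<Lambda>. \<forall>\<mu>\<in>cat_mor \<Lambda>. cat_s G g = cat_r \<Lambda> lam \<longrightarrow> cat_s \<Lambda> lam = cat_r \<Lambda> \<mu> \<longrightarrow>
        act g (cat_comp \<Lambda> lam \<mu>) = cat_comp \<Lambda> (act g lam) (act (res g lam) \<mu>) \<and>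
        res g (cat_comp \<Lambda> lam \<mu>) = res (res g lam) \<mu>)"

text \<open>Zappa--Szep product X \<bowtie> G for a subset X of \<Lambda> (X = \<Lambda> or X = \<Gamma>); a morphism lam g is
 the pair (lam, g) with s(lam) = r(g).\<close>
definition zs_product :: "('o, 'l) cat \<Rightarrow> ('o, 'g) cat \<Rightarrow> ('g \<Rightarrow> 'l \<Rightarrow> 'l) \<Rightarrow> ('g \<Rightarrow> 'l \<Rightarrow> 'g) \<Rightarrow>
    'l set \<Rightarrow> ('o, 'l \<times> 'g) cat" where
  "zs_product \<Lambda> G act res X =
     \<lparr> cat_mor = {(lam, g). lam \<in> X \<and> g \<in> cat_mor G \<and> cat_s \<Lambda> lam = cat_r G g},
       cat_obj = cat_obj \<Lambda>,
       cat_r = (\<lambda>(lam, g). cat_r \<Lambda> lam),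
       cat_s = (\<lambda>(lam, g). cat_s G g),
       cat_comp = (\<lambda>(lam, g) (\<mu>, h). (cat_comp \<Lambda> lam (act g \<mu>), cat_comp G (res g \<mu>) h)),
       cat_id = (\<lambda>v. (cat_id \<Lambda> v, cat_id G v)) \<rparr>"

definition gamma_part :: "nat \<Rightarrow> ('o, 'l) cat \<Rightarrow> ('l \<Rightarrow> nat \<Rightarrow> nat) \<Rightarrow> 'l set" where
  "gamma_part k \<Lambda> d = {lam\<in>cat_mor \<Lambda>. d lam k = 0}"

end

theory Submission
  imports Defs
begin

text \<open>
  A \<sigma>-twisted representation of \<Lambda> \<bowtie> G restricts to one of \<Gamma> \<bowtie> G and, when \<Lambda> is locally
  convex, covariant representations restrict to covariant ones; the universal properties of the
  algebras of \<Gamma> \<bowtie> G then provide \<Phi> and its covariant counterpart. Relation (R3) transfers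
  because right ideals of a Zappa--Szep product only depend on paths, and unique factorisation
  splits every path into a \<Gamma>-path followed by a path of the last colour: the \<Gamma>-part of a common
  extension of two elements of \<Gamma> \<bowtie> G is again a common extension inside \<Gamma> \<bowtie> G.
  Relation (R4) needs finite sets exhaustive in \<Gamma> \<bowtie> G to stay exhaustive in \<Lambda> \<bowtie> G, which
  is where local convexity enters.
\<close>

section \<open>Categories and groupoids\<close>

locale category =
  fixes C :: "('o, 'm) cat"
  assumes is_cat: "is_category C"
begin

lemma id_mor: "v \<in> cat_obj C \<Longrightarrow> cat_id C v \<in> cat_mor C"
  and r_id: "v \<in> cat_obj C \<Longrightarrow> cat_r C (cat_id C v) = v"
  and s_id: "v \<in> cat_obj C \<Longrightarrow> cat_s C (cat_id C v) = v"
  and r_obj: "c \<in> cat_mor C \<Longrightarrow> cat_r C c \<in> cat_obj C"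
  and s_obj: "c \<in> cat_mor C \<Longrightarrow> cat_s C c \<in> cat_obj C"
  using is_cat by (simp_all add: is_category_def)

lemma comp_mor: "a \<in> cat_mor C \<Longrightarrow> b \<in> cat_mor C \<Longrightarrow> cat_s C a = cat_r C b \<Longrightarrow> cat_comp C a b \<in> cat_mor C"
  and r_comp: "a \<in> cat_mor C \<Longrightarrow> b \<in> cat_mor C \<Longrightarrow> cat_s C a = cat_r C b \<Longrightarrow> cat_r C (cat_comp C a b) = cat_r C a"
  and s_comp: "a \<in> cat_mor C \<Longrightarrow> b \<in> cat_mor C \<Longrightarrow> cat_s C a = cat_r C b \<Longrightarrow> cat_s C (cat_comp C a b) = cat_s C b"
  using is_cat by (simp_all add: is_category_def)

lemma comp_assoc:
  "a \<in> cat_mor C \<Longrightarrow> b \<in> cat_mor C \<Longrightarrow> c \<in> cat_mor C \<Longrightarrow> cat_s C a = cat_r C b \<Longrightarrow> cat_s C b = cat_r C c \<Longrightarrow>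
   cat_comp C (cat_comp C a b) c = cat_comp C a (cat_comp C b c)"
  using is_cat by (simp add: is_category_def)

lemma id_comp: "c \<in> cat_mor C \<Longrightarrow> cat_comp C (cat_id C (cat_r C c)) c = c"
  and comp_id: "c \<in> cat_mor C \<Longrightarrow> cat_comp C c (cat_id C (cat_s C c)) = c"
  using is_cat by (simp_all add: is_category_def)

end

locale groupoid = category G for G :: "('o, 'g) cat" +
  assumes is_grpd: "is_groupoid G"
begin

lemma inverse_exists:
  assumes "g \<in> cat_mor G"
  obtains h where "h \<in> cat_mor G" "cat_r G h = cat_s G g" "cat_s G h = cat_r G g"
    "cat_comp G g h = cat_id G (cat_r G g)" "cat_comp G h g = cat_id G (cat_s G g)"
  using is_grpd assms unfolding is_groupoid_def by metis

end

section \<open>Higher-rank graphs\<close>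

locale higher_rank_graph =
  fixes k :: nat and \<Lambda> :: "('o, 'l) cat" and d :: "'l \<Rightarrow> nat \<Rightarrow> nat"
  assumes kgraph: "is_kgraph (Suc k) \<Lambda> d"
begin

abbreviation "L \<equiv> cat_mor \<Lambda>"
abbreviation "r \<equiv> cat_r \<Lambda>"
abbreviation "s \<equiv> cat_s \<Lambda>"
abbreviation "cp \<equiv> cat_comp \<Lambda>"
abbreviation "iL \<equiv> cat_id \<Lambda>"

sublocale Lam: category \<Lambda>
  using kgraph by unfold_locales (simp add: is_kgraph_def)

lemma degree_vanishes: "a \<in> L \<Longrightarrow> Suc k \<le> i \<Longrightarrow> d a i = 0"
  using kgraph unfolding is_kgraph_def by simp

lemma degree_comp: "a \<in> L \<Longrightarrow> b \<in> L \<Longrightarrow> s a = r b \<Longrightarrow> d (cp a b) = (\<lambda>i. d a i + d b i)"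
  using kgraph unfolding is_kgraph_def by simp

lemma unique_factorisation:
  "lam \<in> L \<Longrightarrow> d lam = (\<lambda>i. m i + p i) \<Longrightarrow>
   \<exists>!x. fst x \<in> L \<and> snd x \<in> L \<and> s (fst x) = r (snd x) \<and> d (fst x) = m \<and> d (snd x) = p \<and> cp (fst x) (snd x) = lam"
  using kgraph unfolding is_kgraph_def by blast

lemma factorisation_exists:
  assumes "lam \<in> L" "d lam = (\<lambda>i. m i + p i)"
  obtains a b where "a \<in> L" "b \<in> L" "s a = r b" "d a = m" "d b = p" "cp a b = lam"
  using unique_factorisation[OF assms] by auto

lemma factorisation_unique:
  assumes "a \<in> L" "b \<in> L" "s a = r b" "a' \<in> L" "b' \<in> L" "s a' = r b'"
    and "d a = d a'" "d b = d b'" "cp a b = cp a' b'"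
  shows "a = a' \<and> b = b'"
proof -
  have "d (cp a b) = (\<lambda>i. d a i + d b i)" using assms by (simp add: degree_comp)
  from unique_factorisation[OF Lam.comp_mor[OF assms(1-3)] this] assms
  show ?thesis by (metis fst_conv snd_conv)
qed

lemma degree_id: "v \<in> cat_obj \<Lambda> \<Longrightarrow> d (iL v) = (\<lambda>i. 0)"
proof -
  assume v: "v \<in> cat_obj \<Lambda>"
  have "d (iL v) = d (cp (iL v) (iL v))"
    using Lam.comp_id[OF Lam.id_mor[OF v]] Lam.s_id[OF v] by simp
  also have "\<dots> = (\<lambda>i. d (iL v) i + d (iL v) i)"
    using v by (simp add: Lam.id_mor Lam.r_id Lam.s_id degree_comp)
  finally show ?thesis by (metis add_cancel_right_left)
qed

lemma degree_zero_is_id: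
  assumes b: "b \<in> L" "d b = (\<lambda>i. 0)"
  shows "b = iL (r b)"
proof -
  have rb: "r b \<in> cat_obj \<Lambda>" using b Lam.r_obj by blast
  then show ?thesis
    using factorisation_unique[of "iL (r b)" b b "iL (s b)"] b
    by (simp add: Lam.id_mor Lam.s_obj Lam.r_id Lam.s_id Lam.id_comp Lam.comp_id degree_id)
qed

lemma prefix_of_common_extension:
  assumes a: "a \<in> L" "t \<in> L" "s a = r t" and p: "p \<in> L" "t' \<in> L" "s p = r t'"
    and eq: "cp a t = cp p t'" and le: "\<And>i. d p i \<le> d a i"
  obtains b where "b \<in> L" "s p = r b" "cp p b = a"
proof -
  have "d a = (\<lambda>i. d p i + (d a i - d p i))" using le by (simp add: fun_eq_iff)
  then obtain a1 b where ab: "a1 \<in> L" "b \<in> L" "s a1 = r b" "d a1 = d p" "d b = (\<lambda>i. d a i - d p i)"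
    "cp a1 b = a"
    by (rule factorisation_exists[OF a(1)])
  have sb: "s b = r t" using ab a Lam.s_comp by metis
  have tb: "cp b t \<in> L" using ab a sb Lam.comp_mor by metis
  have "d (cp b t) = d t'"
  proof
    fix i
    have "d (cp a t) i = d (cp p t') i" using eq by simp
    then have "d a i + d t i = d p i + d t' i" using a p by (simp add: degree_comp)
    then show "d (cp b t) i = d t' i" using ab a(2) sb le[of i] by (simp add: degree_comp)
  qed
  moreover have "cp a1 (cp b t) = cp p t'"
    using ab a sb eq by (metis Lam.comp_assoc)
  moreover have "s a1 = r (cp b t)" using ab a sb Lam.r_comp by metis
  ultimately have "a1 = p"
    using factorisation_unique[of a1 "cp b t" p t'] ab(1,4) tb p by blast
  then show thesis using that ab by blast
qed

definition has_edge :: "nat \<Rightarrow> 'o \<Rightarrow> bool" where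
  "has_edge i v \<longleftrightarrow> (\<exists>e\<in>L. r e = v \<and> d e = unit_deg i)"

lemma has_edge_if_degree_pos:
  assumes t: "t \<in> L" and pos: "0 < d t i"
  shows "has_edge i (r t)"
proof -
  have "d t = (\<lambda>j. unit_deg i j + (d t j - unit_deg i j))"
    using pos by (auto simp: unit_deg_def)
  then obtain a b where "a \<in> L" "b \<in> L" "s a = r b" "d a = unit_deg i" "cp a b = t"
    by (rule factorisation_exists[OF t])
  then show ?thesis unfolding has_edge_def by (metis Lam.r_comp)
qed

lemma has_edge_propagates:
  assumes lc: "locally_convex (Suc k) \<Lambda> d" and ij: "i < Suc k" "j < Suc k" "i \<noteq> j"
  shows "b \<in> L \<Longrightarrow> d b = (\<lambda>l. if l = j then n else 0) \<Longrightarrow> has_edge i (r b) \<Longrightarrow> has_edge i (s b)"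
proof (induction n arbitrary: b)
  case 0
  then have "b = iL (r b)" by (intro degree_zero_is_id) auto
  then show ?case using "0.prems" by (metis Lam.r_obj Lam.s_id)
next
  case (Suc n)
  have "d b = (\<lambda>l. unit_deg j l + (if l = j then n else 0))"
    using Suc.prems by (auto simp: unit_deg_def)
  then obtain e c where ec: "e \<in> L" "c \<in> L" "s e = r c" "d e = unit_deg j"
    "d c = (\<lambda>l. if l = j then n else 0)" "cp e c = b"
    by (rule factorisation_exists[OF Suc.prems(1)])
  have "has_edge i (r e)" using Suc.prems(3) ec Lam.r_comp by metis
  then have "has_edge i (s e)"
    using lc ij ec unfolding locally_convex_def has_edge_def by blast
  then have "has_edge i (s c)" using Suc.IH ec by metis
  then show ?case using ec Lam.s_comp by metis
qed

abbreviation "Gam \<equiv> gamma_part k \<Lambda> d"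

lemma gamma_part_iff: "a \<in> Gam \<longleftrightarrow> a \<in> L \<and> d a k = 0"
  by (simp add: gamma_part_def)

lemma id_in_gamma: "v \<in> cat_obj \<Lambda> \<Longrightarrow> iL v \<in> Gam"
  by (simp add: gamma_part_iff Lam.id_mor degree_id)

definition gamma_deg :: "(nat \<Rightarrow> nat) \<Rightarrow> nat \<Rightarrow> nat" where
  "gamma_deg m = (\<lambda>i. if i = k then 0 else m i)"

definition last_deg :: "(nat \<Rightarrow> nat) \<Rightarrow> nat \<Rightarrow> nat" where
  "last_deg m = (\<lambda>i. if i = k then m k else 0)"

lemma gamma_last_split: "m = (\<lambda>i. gamma_deg m i + last_deg m i)"
  by (auto simp: gamma_deg_def last_deg_def)

lemma gamma_last_factorisation:
  assumes "lam \<in> L"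
  obtains a b where "a \<in> Gam" "b \<in> L" "s a = r b" "d a = gamma_deg (d lam)"
    "d b = last_deg (d lam)" "cp a b = lam"
  using factorisation_exists[OF assms gamma_last_split] by (metis gamma_part_iff gamma_deg_def)

lemma gamma_part_of_extension:
  assumes g: "g \<in> Gam" and m: "m \<in> L" "s g = r m"
    and ab: "a \<in> L" "b \<in> L" "s a = r b" "d a = gamma_deg (d (cp g m))" "d b = last_deg (d (cp g m))"
      "cp a b = cp g m"
  obtains n where "n \<in> Gam" "s g = r n" "a = cp g n"
proof -
  have gL: "g \<in> L" and g0: "d g k = 0" using g by (auto simp: gamma_part_iff)
  obtain n t where nt: "n \<in> Gam" "t \<in> L" "s n = r t" "d n = gamma_deg (d m)" "d t = last_deg (d m)"
    "cp n t = m"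
    using gamma_last_factorisation m(1) by blast
  have nL: "n \<in> L" using nt gamma_part_iff by blast
  have rn: "r n = r m" using nt nL Lam.r_comp by metis
  have "a = cp g n"
  proof (rule conjunct1[OF factorisation_unique])
    show "s (cp g n) = r t" using gL nL nt m rn Lam.s_comp by metis
    show "cp a b = cp (cp g n) t" using ab gL nL nt m rn Lam.comp_assoc by metis
    show "d a = d (cp g n)" "d b = d t"
      using ab nt gL nL m rn g0 by (auto simp: degree_comp gamma_deg_def last_deg_def fun_eq_iff)
  qed (use ab gL nL nt m rn Lam.comp_mor in auto)
  then show thesis using that nt rn m by metis
qed

lemma maximal_gamma_extension:
  assumes v: "v \<in> cat_obj \<Lambda>"
  obtains p where "p \<in> Gam" "r p = v" "\<And>i. d p i \<le> N i"
    "\<And>i. i < k \<Longrightarrow> d p i < N i \<Longrightarrow> \<not> has_edge i (s p)"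
proof -
  define P where "P p \<longleftrightarrow> p \<in> Gam \<and> r p = v \<and> (\<forall>i. d p i \<le> N i)" for p
  define size where "size p = (\<Sum>i<k. d p i)" for p
  have "P (iL v)" using v by (simp add: P_def id_in_gamma Lam.r_id degree_id)
  moreover have "size p < Suc (\<Sum>i<k. N i)" if "P p" for p
    using that unfolding P_def size_def by (simp add: le_imp_less_Suc sum_mono)
  ultimately obtain p where Pp: "P p" and max: "\<And>q. P q \<Longrightarrow> size q \<le> size p"
    using ex_has_greatest_nat[of P "iL v" size] by metis
  have pL: "p \<in> L" and p0: "d p k = 0" using Pp by (auto simp: P_def gamma_part_iff)
  have "\<not> has_edge i (s p)" if i: "i < k" "d p i < N i" for i
  proof
    assume "has_edge i (s p)"
    then obtain e where e: "e \<in> L" "r e = s p" "d e = unit_deg i" unfolding has_edge_def by blast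
    have de: "d (cp p e) = (\<lambda>j. d p j + unit_deg i j)" using degree_comp pL e by metis
    have "P (cp p e)"
      using Pp e pL i p0 de Lam.comp_mor Lam.r_comp
      by (auto simp: P_def gamma_part_iff unit_deg_def)
    then have "size (cp p e) \<le> size p" by (rule max)
    moreover have "size (cp p e) = size p + 1"
      using i(1) by (simp add: size_def de sum.distrib unit_deg_def)
    ultimately show False by simp
  qed
  then show thesis using that Pp by (auto simp: P_def)
qed

lemma colour_absent_before_tail:
  assumes lc: "locally_convex (Suc k) \<Lambda> d" and i: "i < k"
    and b: "b \<in> L" "d b = last_deg m" "\<not> has_edge i (s b)" and t: "t \<in> L" "r t = r b"
  shows "d t i = 0"
proof -
  have "\<not> has_edge i (r b)"
    using has_edge_propagates[OF lc, of i k b "m k"] i b by (auto simp: last_deg_def)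
  then show ?thesis using has_edge_if_degree_pos t by fastforce
qed

definition common_extension :: "'l set \<Rightarrow> 'l \<Rightarrow> 'l \<Rightarrow> bool" where
  "common_extension X a b \<longleftrightarrow> (\<exists>t\<in>X. \<exists>t'\<in>X. s a = r t \<and> s b = r t' \<and> cp a t = cp b t')"

text \<open>
  Extend \<lambda> by a maximal \<Gamma>-path q and let a be the \<Gamma>-part of \<lambda>q, which meets some p \<in> F
  inside \<Gamma>. In a colour i < k in which a is shorter than the bound N, no i-edge leaves s(q),
  so by local convexity none leaves the start of the last-colour tail of \<lambda>q; hence the
  extension of a contributes nothing in colour i, d(p) \<le> d(a), and p is a prefix of a.
\<close>
lemma gamma_exhaustive_paths_extend:
  assumes lc: "locally_convex (Suc k) \<Lambda> d" and F: "finite F" "F \<subseteq> Gam"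
    and exh: "\<And>q. q \<in> Gam \<Longrightarrow> r q = v \<Longrightarrow> \<exists>p\<in>F. common_extension Gam q p"
    and lam: "lam \<in> L" "r lam = v"
  shows "\<exists>p\<in>F. common_extension L lam p"
proof -
  define N where "N i = (\<Sum>p\<in>F. d p i)" for i
  obtain q where q: "q \<in> Gam" "r q = s lam" "\<And>i. d q i \<le> N i"
    and no_edge: "\<And>i. i < k \<Longrightarrow> d q i < N i \<Longrightarrow> \<not> has_edge i (s q)"
    using maximal_gamma_extension[of "s lam" N] lam Lam.s_obj by metis
  have qL: "q \<in> L" using q gamma_part_iff by blast
  define x where "x = cp lam q"
  have xL: "x \<in> L" "r x = v" "s x = s q" "d x = (\<lambda>i. d lam i + d q i)"
    using lam qL q by (auto simp: x_def Lam.comp_mor Lam.r_comp Lam.s_comp degree_comp)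
  obtain a b where ab: "a \<in> Gam" "b \<in> L" "s a = r b" "d a = gamma_deg (d x)"
    "d b = last_deg (d x)" "cp a b = x"
    using gamma_last_factorisation xL(1) by blast
  have aL: "a \<in> L" using ab gamma_part_iff by blast
  have "r a = v" "s b = s q" using ab aL xL Lam.r_comp Lam.s_comp by metis+
  then obtain p t t' where p: "p \<in> F" "t \<in> Gam" "t' \<in> Gam" "s a = r t" "s p = r t'"
    "cp a t = cp p t'"
    using exh[OF ab(1)] unfolding common_extension_def by blast
  have pL: "p \<in> L" "d p k = 0" and tL: "t \<in> L" "t' \<in> L"
    using p F by (auto simp: gamma_part_iff)
  have "(\<lambda>i. d a i + d t i) = (\<lambda>i. d p i + d t' i)"
    using degree_comp[OF aL tL(1) p(4)] degree_comp[OF pL(1) tL(2) p(5)] p(6) by metis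
  then have same_deg: "d a i + d t i = d p i + d t' i" for i by metis
  have "d p i \<le> d a i" for i
  proof (cases "i < k \<and> d a i < N i")
    case True
    have "d q i < N i" using True xL ab by (auto simp: gamma_deg_def split: if_splits)
    then have "\<not> has_edge i (s b)" using no_edge True \<open>s b = s q\<close> by simp
    then have "d t i = 0"
      using colour_absent_before_tail[OF lc _ ab(2,5)] True tL(1) p(4) ab(3) by simp
    then show ?thesis using same_deg[of i] by simp
  next
    case False
    have "d p i \<le> N i" unfolding N_def using F p(1) by (intro member_le_sum) auto
    moreover have "d p i = 0" if "\<not> i < k"
      using that pL degree_vanishes[OF pL(1), of i] by (cases "i = k") auto
    ultimately show ?thesis using False by force
  qed
  then obtain c where c: "c \<in> L" "s p = r c" "cp p c = a"
    using prefix_of_common_extension[OF aL tL(1) p(4) pL(1) tL(2) p(5,6)] by blast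
  have "s c = r b" using c ab pL Lam.s_comp by metis
  then have "cp lam q = cp p (cp c b)" "s p = r (cp c b)" "cp c b \<in> L"
    using c ab pL x_def Lam.comp_assoc Lam.r_comp Lam.comp_mor by metis+
  then show ?thesis
    unfolding common_extension_def using p(1) qL q(2) by metis
qed

end

section \<open>Zappa--Szep products of self-similar actions\<close>

locale self_similar_graph = higher_rank_graph k \<Lambda> d
  for k :: nat and \<Lambda> :: "('o, 'l) cat" and d :: "'l \<Rightarrow> nat \<Rightarrow> nat" +
  fixes G :: "('o, 'g) cat" and act :: "'g \<Rightarrow> 'l \<Rightarrow> 'l" and res :: "'g \<Rightarrow> 'l \<Rightarrow> 'g"
  assumes grpd: "is_groupoid G"
    and objs: "cat_obj G = cat_obj \<Lambda>"
    and ss: "self_similar \<Lambda> G d act res"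
begin

abbreviation "Gm \<equiv> cat_mor G"
abbreviation "rG \<equiv> cat_r G"
abbreviation "sG \<equiv> cat_s G"
abbreviation "cG \<equiv> cat_comp G"
abbreviation "iG \<equiv> cat_id G"

sublocale G: groupoid G
  using grpd by unfold_locales (simp_all add: is_groupoid_def)

lemma act_mor: "g \<in> Gm \<Longrightarrow> a \<in> L \<Longrightarrow> sG g = r a \<Longrightarrow> act g a \<in> L"
  and res_mor: "g \<in> Gm \<Longrightarrow> a \<in> L \<Longrightarrow> sG g = r a \<Longrightarrow> res g a \<in> Gm"
  and r_act: "g \<in> Gm \<Longrightarrow> a \<in> L \<Longrightarrow> sG g = r a \<Longrightarrow> r (act g a) = rG g"
  and s_act: "g \<in> Gm \<Longrightarrow> a \<in> L \<Longrightarrow> sG g = r a \<Longrightarrow> s (act g a) = rG (res g a)"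
  and s_res: "g \<in> Gm \<Longrightarrow> a \<in> L \<Longrightarrow> sG g = r a \<Longrightarrow> sG (res g a) = s a"
  and degree_act: "g \<in> Gm \<Longrightarrow> a \<in> L \<Longrightarrow> sG g = r a \<Longrightarrow> d (act g a) = d a"
  using ss by (simp_all add: self_similar_def)

lemma act_id: "a \<in> L \<Longrightarrow> act (iG (r a)) a = a"
  using ss by (simp add: self_similar_def)

lemma act_comp:
  "g \<in> Gm \<Longrightarrow> h \<in> Gm \<Longrightarrow> a \<in> L \<Longrightarrow> sG g = rG h \<Longrightarrow> sG h = r a \<Longrightarrow>
   act (cG g h) a = act g (act h a)"
  using ss by (simp add: self_similar_def)

abbreviation "Z X \<equiv> zs_product \<Lambda> G act res X"

lemma zs_mor: "(a, g) \<in> cat_mor (Z X) \<longleftrightarrow> a \<in> X \<and> g \<in> Gm \<and> s a = rG g"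
  and zs_r [simp]: "cat_r (Z X) (a, g) = r a"
  and zs_s [simp]: "cat_s (Z X) (a, g) = sG g"
  and zs_comp [simp]: "cat_comp (Z X) (a, g) (b, h) = (cp a (act g b), cG (res g b) h)"
  and zs_id [simp]: "cat_id (Z X) v = (iL v, iG v)"
  and zs_obj [simp]: "cat_obj (Z X) = cat_obj \<Lambda>"
  by (simp_all add: zs_product_def)

lemma zs_same_structure:
  "cat_r (Z X) = cat_r (Z Y)" "cat_s (Z X) = cat_s (Z Y)" "cat_comp (Z X) = cat_comp (Z Y)"
  "cat_id (Z X) = cat_id (Z Y)"
  by (simp_all add: zs_product_def)

definition invariant_subcategory :: "'l set \<Rightarrow> bool" where
  "invariant_subcategory X \<longleftrightarrow> X \<subseteq> L \<and> (\<forall>v\<in>cat_obj \<Lambda>. iL v \<in> X) \<and>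
     (\<forall>a\<in>X. \<forall>b\<in>X. s a = r b \<longrightarrow> cp a b \<in> X) \<and>
     (\<forall>g\<in>Gm. \<forall>a\<in>X. sG g = r a \<longrightarrow> act g a \<in> X)"

lemma invariant_subcategory_L: "invariant_subcategory L"
  by (simp add: invariant_subcategory_def Lam.id_mor Lam.comp_mor act_mor)

lemma invariant_subcategory_gamma: "invariant_subcategory Gam"
  by (auto simp: invariant_subcategory_def gamma_part_iff Lam.id_mor degree_id Lam.comp_mor act_mor
      degree_comp degree_act)

text \<open>As g acts bijectively on paths, right multiplication by (a, g) reaches every (a t, h).\<close>
lemma groupoid_absorbed:
  assumes X: "invariant_subcategory X" and g: "g \<in> Gm" and t: "t \<in> X" "r t = rG g"
    and h: "h \<in> Gm" "s t = rG h"
  obtains t' h' where "(t', h') \<in> cat_mor (Z X)" "sG g = r t'" "act g t' = t" "cG (res g t') h' = h"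
proof -
  have tL: "t \<in> L" using t X by (auto simp: invariant_subcategory_def)
  obtain g' where g': "g' \<in> Gm" "rG g' = sG g" "sG g' = rG g" "cG g g' = iG (rG g)"
    using G.inverse_exists[OF g] by metis
  define t' where "t' = act g' t"
  have t': "t' \<in> X" "t' \<in> L" "r t' = sG g"
    using X act_mor r_act g' g t tL by (auto simp: t'_def invariant_subcategory_def)
  have act_t': "act g t' = t"
    using act_comp[OF g g'(1) tL] act_id[OF tL] g g' t by (simp add: t'_def)
  define q where "q = res g t'"
  have q: "q \<in> Gm" "sG q = s t'" "rG q = s t"
    using res_mor s_res s_act g t' act_t' by (metis q_def)+
  obtain q' where q': "q' \<in> Gm" "rG q' = sG q" "sG q' = rG q" "cG q q' = iG (rG q)"
    using G.inverse_exists[OF q(1)] by metis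
  have "cG q (cG q' h) = h"
    using G.comp_assoc[of q q' h] G.id_comp[OF h(1)] q q' h by auto
  moreover have "(t', cG q' h) \<in> cat_mor (Z X)"
    using t' q q' h G.comp_mor G.r_comp by (auto simp: zs_mor)
  ultimately show thesis using that[of t' "cG q' h"] t' act_t' by (simp add: q_def)
qed

lemma zs_right_ideal:
  assumes X: "invariant_subcategory X" and ag: "(a, g) \<in> cat_mor (Z X)"
  shows "right_ideal (Z X) (a, g) = {(b, h) \<in> cat_mor (Z X). \<exists>t\<in>X. s a = r t \<and> b = cp a t}"
proof -
  have XL: "X \<subseteq> L" and Xcp: "\<And>b c. b \<in> X \<Longrightarrow> c \<in> X \<Longrightarrow> s b = r c \<Longrightarrow> cp b c \<in> X"
    and Xact: "\<And>h b. h \<in> Gm \<Longrightarrow> b \<in> X \<Longrightarrow> sG h = r b \<Longrightarrow> act h b \<in> X"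
    using X by (auto simp: invariant_subcategory_def)
  have aX: "a \<in> X" and g: "g \<in> Gm" "s a = rG g" using ag by (auto simp: zs_mor)
  show ?thesis
  proof (intro set_eqI iffI)
    fix z
    assume "z \<in> right_ideal (Z X) (a, g)"
    then obtain t h where th: "t \<in> X" "h \<in> Gm" "s t = rG h" "sG g = r t"
      and z: "z = (cp a (act g t), cG (res g t) h)"
      unfolding right_ideal_def by (auto simp: zs_mor)
    have tL: "t \<in> L" using th XL by blast
    have "act g t \<in> X" using Xact g th by blast
    moreover have "s a = r (act g t)" using g th tL r_act by metis
    moreover have "cG (res g t) h \<in> Gm" "s (act g t) = rG (cG (res g t) h)"
      using G.comp_mor G.r_comp res_mor s_res s_act g th tL by metis+
    ultimately show "z \<in> {(b, h) \<in> cat_mor (Z X). \<exists>t\<in>X. s a = r t \<and> b = cp a t}"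
      using z Xcp aX XL Lam.s_comp act_mor[OF g(1) tL th(4)] by (auto simp: zs_mor)
  next
    fix z
    assume "z \<in> {(b, h) \<in> cat_mor (Z X). \<exists>t\<in>X. s a = r t \<and> b = cp a t}"
    then obtain b h t where z: "z = (b, h)" and bh: "b \<in> X" "h \<in> Gm" "s b = rG h"
      and t: "t \<in> X" "s a = r t" "b = cp a t" by (auto simp: zs_mor)
    have "s t = rG h" using Lam.s_comp[of a t] aX XL t bh by (metis subsetD)
    then obtain t' h' where "(t', h') \<in> cat_mor (Z X)" "sG g = r t'" "act g t' = t"
      "cG (res g t') h' = h"
      using groupoid_absorbed[OF X g(1) t(1)] t(2) g(2) bh(2) by metis
    then show "z \<in> right_ideal (Z X) (a, g)"
      unfolding right_ideal_def using z t by force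
  qed
qed

lemma zs_mor_path: "a \<in> X \<Longrightarrow> a \<in> L \<Longrightarrow> (a, iG (s a)) \<in> cat_mor (Z X)"
  using objs Lam.s_obj G.id_mor G.r_id by (simp add: zs_mor)

lemma path_mem_zs_right_ideal:
  assumes X: "invariant_subcategory X" and ag: "(a, g) \<in> cat_mor (Z X)" and t: "t \<in> X" "s a = r t"
  shows "(cp a t, iG (s t)) \<in> right_ideal (Z X) (a, g)"
proof -
  have "a \<in> L" "t \<in> L" "cp a t \<in> X" using X ag t by (auto simp: invariant_subcategory_def zs_mor)
  moreover have "s t \<in> cat_obj G" using objs \<open>t \<in> L\<close> Lam.s_obj by simp
  ultimately show ?thesis
    using zs_right_ideal[OF X ag] t G.id_mor G.r_id Lam.s_comp by (auto simp: zs_mor)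
qed

lemma mem_zs_right_ideal_self:
  assumes X: "invariant_subcategory X" and c: "c \<in> cat_mor (Z X)"
  shows "c \<in> right_ideal (Z X) c"
proof -
  obtain a g where ag: "c = (a, g)" by (cases c)
  have aL: "a \<in> L" using X c ag by (auto simp: invariant_subcategory_def zs_mor)
  have "iL (s a) \<in> X" using X Lam.s_obj[OF aL] by (simp add: invariant_subcategory_def)
  moreover have "a = cp a (iL (s a))" "s a = r (iL (s a))"
    using Lam.comp_id[OF aL] Lam.r_id[OF Lam.s_obj[OF aL]] by auto
  ultimately show ?thesis
    using zs_right_ideal[OF X c[unfolded ag]] c ag by blast
qed

lemma zs_right_ideal_subset:
  "invariant_subcategory X \<Longrightarrow> c \<in> cat_mor (Z X) \<Longrightarrow> right_ideal (Z X) c \<subseteq> cat_mor (Z X)"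
  using zs_right_ideal by (cases c) auto

lemma zs_right_ideal_append:
  assumes X: "invariant_subcategory X" and c: "c \<in> cat_mor (Z X)" and a: "(a, h) \<in> right_ideal (Z X) c"
    and b: "b \<in> X" "s a = r b" and z: "(cp a b, g) \<in> cat_mor (Z X)"
  shows "(cp a b, g) \<in> right_ideal (Z X) c"
proof -
  have XL: "X \<subseteq> L" and Xcp: "\<And>b c. b \<in> X \<Longrightarrow> c \<in> X \<Longrightarrow> s b = r c \<Longrightarrow> cp b c \<in> X"
    using X by (auto simp: invariant_subcategory_def)
  obtain c1 f where cf: "c = (c1, f)" by (cases c)
  have c1: "c1 \<in> L" using c cf XL by (auto simp: zs_mor)
  obtain t where t: "t \<in> X" "s c1 = r t" "a = cp c1 t"
    using a zs_right_ideal[OF X c[unfolded cf]] cf by auto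
  have tb: "t \<in> L" "b \<in> L" using t b XL by auto
  have "s t = r b" using t b c1 tb Lam.s_comp by metis
  then have "cp a b = cp c1 (cp t b)" "cp t b \<in> X" "s c1 = r (cp t b)"
    using t b c1 tb Xcp Lam.comp_assoc Lam.r_comp by metis+
  then show ?thesis using zs_right_ideal[OF X c[unfolded cf]] cf z by blast
qed

lemma zs_right_ideal_trans:
  assumes X: "invariant_subcategory X" and c: "c \<in> cat_mor (Z X)" and b: "b \<in> right_ideal (Z X) c"
  shows "right_ideal (Z X) b \<subseteq> right_ideal (Z X) c"
proof
  obtain b1 h where bh: "b = (b1, h)" by (cases b)
  have bm: "b \<in> cat_mor (Z X)" using zs_right_ideal_subset[OF X c] b by blast
  fix z
  assume "z \<in> right_ideal (Z X) b"
  then obtain t g where "z = (cp b1 t, g)" "z \<in> cat_mor (Z X)" "t \<in> X" "s b1 = r t"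
    using zs_right_ideal[OF X bm[unfolded bh]] bh by auto
  then show "z \<in> right_ideal (Z X) c" using zs_right_ideal_append[OF X c] b bh by blast
qed

lemma zs_gamma_subset: "cat_mor (Z Gam) \<subseteq> cat_mor (Z L)"
  by (auto simp: zs_product_def gamma_part_iff)

lemma gamma_right_ideal:
  assumes c: "c \<in> cat_mor (Z Gam)"
  shows "right_ideal (Z Gam) c = right_ideal (Z L) c \<inter> cat_mor (Z Gam)"
proof -
  obtain a g where ag: "c = (a, g)" by (cases c)
  have a: "a \<in> L" "d a k = 0" using c ag by (auto simp: zs_mor gamma_part_iff)
  have ext: "t \<in> Gam" if "t \<in> L" "s a = r t" "cp a t \<in> Gam" for t
    using that a degree_comp by (auto simp: gamma_part_iff)
  have "Gam \<subseteq> L" by (auto simp: gamma_part_iff)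
  then show ?thesis
    unfolding ag zs_right_ideal[OF invariant_subcategory_gamma c[unfolded ag]]
      zs_right_ideal[OF invariant_subcategory_L subsetD[OF zs_gamma_subset c[unfolded ag]]]
    by (auto simp: zs_mor) (use ext in blast)
qed

lemma gamma_head_mem_right_ideal:
  assumes c: "c \<in> cat_mor (Z Gam)" and z: "(lam, g) \<in> right_ideal (Z L) c"
    and ab: "a \<in> L" "b \<in> L" "s a = r b" "d a = gamma_deg (d lam)" "d b = last_deg (d lam)"
      "cp a b = lam"
  shows "(a, iG (s a)) \<in> right_ideal (Z Gam) c"
proof -
  obtain a1 g1 where cg: "c = (a1, g1)" by (cases c)
  have a1: "a1 \<in> Gam" "a1 \<in> L" using c cg by (auto simp: zs_mor gamma_part_iff)
  obtain m where m: "m \<in> L" "s a1 = r m" "lam = cp a1 m"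
    using z zs_right_ideal[OF invariant_subcategory_L] zs_gamma_subset c cg by blast
  obtain n where n: "n \<in> Gam" "s a1 = r n" "a = cp a1 n"
    using gamma_part_of_extension[OF a1(1) m(1,2) ab(1-3)] ab(4-6) m(3) by metis
  have "s n = s a" using Lam.s_comp[of a1 n] n a1 by (auto simp: gamma_part_iff)
  then show ?thesis
    using path_mem_zs_right_ideal[OF invariant_subcategory_gamma c[unfolded cg] n(1,2)] n(3) cg
    by simp
qed

text \<open>The \<Gamma>-part of a common extension in \<Lambda> \<bowtie> G is a common extension in \<Gamma> \<bowtie> G.\<close>
lemma gamma_ideal_intersection:
  assumes c1: "c1 \<in> cat_mor (Z Gam)" and c2: "c2 \<in> cat_mor (Z Gam)" and F: "F \<subseteq> cat_mor (Z Gam)"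
    and eq: "right_ideal (Z Gam) c1 \<inter> right_ideal (Z Gam) c2 = set_ideal (Z Gam) F"
  shows "right_ideal (Z L) c1 \<inter> right_ideal (Z L) c2 = set_ideal (Z L) F"
proof (intro equalityI subsetI)
  fix z
  assume "z \<in> set_ideal (Z L) F"
  then obtain f where f: "f \<in> F" "z \<in> right_ideal (Z L) f" unfolding set_ideal_def by blast
  have "f \<in> set_ideal (Z Gam) F"
    using mem_zs_right_ideal_self[OF invariant_subcategory_gamma] f F unfolding set_ideal_def by blast
  then have "f \<in> right_ideal (Z L) c1" "f \<in> right_ideal (Z L) c2"
    using eq gamma_right_ideal[OF c1] gamma_right_ideal[OF c2] by auto
  then show "z \<in> right_ideal (Z L) c1 \<inter> right_ideal (Z L) c2"
    using zs_right_ideal_trans[OF invariant_subcategory_L] c1 c2 zs_gamma_subset f by blast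
next
  fix z
  assume z: "z \<in> right_ideal (Z L) c1 \<inter> right_ideal (Z L) c2"
  obtain lam g where zg: "z = (lam, g)" by (cases z)
  have zm: "z \<in> cat_mor (Z L)"
    using z zs_right_ideal_subset[OF invariant_subcategory_L] c1 zs_gamma_subset by blast
  then obtain a b where ab: "a \<in> Gam" "b \<in> L" "s a = r b" "d a = gamma_deg (d lam)"
    "d b = last_deg (d lam)" "cp a b = lam"
    using gamma_last_factorisation zg by (auto simp: zs_mor)
  have aL: "a \<in> L" using ab gamma_part_iff by blast
  have "(a, iG (s a)) \<in> right_ideal (Z Gam) c1 \<inter> right_ideal (Z Gam) c2"
    using gamma_head_mem_right_ideal[OF _ _ aL ab(2-6)] c1 c2 z zg by blast
  then obtain f where f: "f \<in> F" "(a, iG (s a)) \<in> right_ideal (Z Gam) f"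
    using eq unfolding set_ideal_def by blast
  have fm: "f \<in> cat_mor (Z Gam)" using F f by blast
  then have "(a, iG (s a)) \<in> right_ideal (Z L) f" using f gamma_right_ideal by blast
  then have "z \<in> right_ideal (Z L) f"
    using zs_right_ideal_append[OF invariant_subcategory_L _ _ ab(2,3)] fm zs_gamma_subset zm zg ab(6)
    by blast
  then show "z \<in> set_ideal (Z L) F" unfolding set_ideal_def using f by blast
qed

lemma gamma_independent:
  assumes "F \<subseteq> cat_mor (Z Gam)" "independent (Z Gam) F"
  shows "independent (Z L) F"
  using assms gamma_right_ideal unfolding independent_def by blast

lemma twisted_rep_gamma_restrict:
  assumes rep: "twisted_rep (Z L) \<sigma> S"
  shows "twisted_rep (Z Gam) \<sigma> S"
  unfolding twisted_rep_def zs_same_structure[of Gam L]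
proof (intro conjI ballI allI impI)
  fix c
  assume "c \<in> cat_mor (Z Gam)"
  then have c: "c \<in> cat_mor (Z L)" using zs_gamma_subset by blast
  show "partial_isometry (S c)" using rep c unfolding twisted_rep_def by blast
  show "cadj (S c) * S c = S (cat_id (Z L) (cat_s (Z L) c))" using rep c unfolding twisted_rep_def by blast
next
  fix c1 c2
  assume "c1 \<in> cat_mor (Z Gam)" "c2 \<in> cat_mor (Z Gam)"
  then have "c1 \<in> cat_mor (Z L)" "c2 \<in> cat_mor (Z L)" using zs_gamma_subset by blast+
  then show "S c1 * S c2 = (if cat_s (Z L) c1 = cat_r (Z L) c2
      then cscale (\<sigma> c1 c2) (S (cat_comp (Z L) c1 c2)) else 0)"
    using rep unfolding twisted_rep_def by blast
next
  fix c1 c2 F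
  assume c: "c1 \<in> cat_mor (Z Gam)" "c2 \<in> cat_mor (Z Gam)" and F: "finite F" "F \<subseteq> cat_mor (Z Gam)"
    "independent (Z Gam) F" "right_ideal (Z Gam) c1 \<inter> right_ideal (Z Gam) c2 = set_ideal (Z Gam) F"
  have "c1 \<in> cat_mor (Z L)" "c2 \<in> cat_mor (Z L)" "F \<subseteq> cat_mor (Z L)"
    using c F zs_gamma_subset by blast+
  moreover have "independent (Z L) F" using gamma_independent F by blast
  moreover have "right_ideal (Z L) c1 \<inter> right_ideal (Z L) c2 = set_ideal (Z L) F"
    using gamma_ideal_intersection c F by blast
  ultimately show "is_proj_sup {S c * cadj (S c) |c. c \<in> F} (S c1 * cadj (S c1) * S c2 * cadj (S c2))"
    using rep \<open>finite F\<close> unfolding twisted_rep_def by blast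
qed

lemma zs_id_mor: "v \<in> cat_obj \<Lambda> \<Longrightarrow> iL v \<in> X \<Longrightarrow> (iL v, iG v) \<in> cat_mor (Z X)"
  using zs_mor_path[of "iL v" X] Lam.id_mor Lam.s_id by simp

lemma exhaustive_gamma_paths_meet:
  assumes v: "v \<in> cat_obj \<Lambda>" and exh: "exhaustive (Z Gam) v F" and q: "q \<in> Gam" "r q = v"
  shows "\<exists>p\<in>fst ` F. common_extension Gam q p"
proof -
  have idG: "(iL v, iG v) \<in> cat_mor (Z Gam)" using zs_id_mor id_in_gamma v by blast
  have qL: "q \<in> L" using q gamma_part_iff by blast
  have qm: "(q, iG (s q)) \<in> cat_mor (Z Gam)" using zs_mor_path q qL by blast
  have "(q, iG (s q)) \<in> right_ideal (Z Gam) (iL v, iG v)"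
    using path_mem_zs_right_ideal[OF invariant_subcategory_gamma idG q(1)]
      Lam.id_comp[OF qL] Lam.s_id[OF v] q(2) by simp
  then have "right_ideal (Z Gam) (q, iG (s q)) \<inter> set_ideal (Z Gam) F \<noteq> {}"
    using exh by (simp add: exhaustive_def)
  then obtain z p h where z: "z \<in> right_ideal (Z Gam) (q, iG (s q))" "(p, h) \<in> F"
    "z \<in> right_ideal (Z Gam) (p, h)"
    unfolding set_ideal_def by auto
  have "(p, h) \<in> cat_mor (Z Gam)"
    using z(2) exh zs_right_ideal_subset[OF invariant_subcategory_gamma idG] by (auto simp: exhaustive_def)
  then obtain t' where t': "t' \<in> Gam" "s p = r t'" "fst z = cp p t'"
    using z(3) zs_right_ideal[OF invariant_subcategory_gamma] by fastforce
  obtain t where t: "t \<in> Gam" "s q = r t" "fst z = cp q t"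
    using z(1) zs_right_ideal[OF invariant_subcategory_gamma qm] by auto
  have "common_extension Gam q p" unfolding common_extension_def using t t' by metis
  then show ?thesis using z(2) by force
qed

lemma exhaustive_gamma_imp_exhaustive:
  assumes lc: "locally_convex (Suc k) \<Lambda> d" and v: "v \<in> cat_obj \<Lambda>" and F: "finite F"
    and exh: "exhaustive (Z Gam) v F"
  shows "exhaustive (Z L) v F"
proof -
  have idG: "(iL v, iG v) \<in> cat_mor (Z Gam)" using zs_id_mor id_in_gamma v by blast
  have idL: "(iL v, iG v) \<in> cat_mor (Z L)" using zs_id_mor Lam.id_mor v by blast
  have FG: "F \<subseteq> right_ideal (Z Gam) (iL v, iG v)" using exh by (simp add: exhaustive_def)
  then have FZ: "F \<subseteq> cat_mor (Z Gam)"
    using zs_right_ideal_subset[OF invariant_subcategory_gamma idG] by blast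
  have FL: "F \<subseteq> right_ideal (Z L) (iL v, iG v)" using FG gamma_right_ideal[OF idG] by blast
  have heads: "fst ` F \<subseteq> Gam" using FZ by (auto simp: zs_mor)
  have "right_ideal (Z L) c \<inter> set_ideal (Z L) F \<noteq> {}" if c: "c \<in> right_ideal (Z L) (iL v, iG v)" for c
  proof -
    obtain lam g where cg: "c = (lam, g)" by (cases c)
    obtain m where cm: "c \<in> cat_mor (Z L)" and m: "m \<in> L" "s (iL v) = r m" "lam = cp (iL v) m"
      using c zs_right_ideal[OF invariant_subcategory_L idL] cg by auto
    have lam: "lam \<in> L" "r lam = v" using m Lam.id_comp Lam.s_id[OF v] by auto
    obtain p t t' where p: "p \<in> fst ` F" and t: "t \<in> L" "t' \<in> L" "s lam = r t" "s p = r t'"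
        "cp lam t = cp p t'"
      using gamma_exhaustive_paths_extend[OF lc finite_imageI[OF F] heads
          exhaustive_gamma_paths_meet[OF v exh] lam]
      unfolding common_extension_def by blast
    obtain h where f: "(p, h) \<in> F" using p by force
    have fm: "(p, h) \<in> cat_mor (Z L)" using f FZ zs_gamma_subset by blast
    have "s t = s t'"
      using Lam.s_comp[OF lam(1) t(1,3)] Lam.s_comp[OF _ t(2,4)] t(5) fm by (simp add: zs_mor)
    then have "(cp lam t, iG (s t)) \<in> right_ideal (Z L) c \<inter> right_ideal (Z L) (p, h)"
      using path_mem_zs_right_ideal[OF invariant_subcategory_L] cm cg fm t by (metis IntI)
    then show ?thesis unfolding set_ideal_def using f by blast
  qed
  then show ?thesis using FL by (simp add: exhaustive_def)
qed

lemma covariant_rep_gamma_restrict: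
  assumes lc: "locally_convex (Suc k) \<Lambda> d" and rep: "covariant_twisted_rep (Z L) \<sigma> S"
  shows "covariant_twisted_rep (Z Gam) \<sigma> S"
  using rep twisted_rep_gamma_restrict exhaustive_gamma_imp_exhaustive[OF lc]
  unfolding covariant_twisted_rep_def zs_same_structure(4)[of Gam L] zs_obj by blast

end

theorem theorem3p20:
  fixes k :: nat
    and \<Lambda> :: "('o, 'l) cat" and d :: "'l \<Rightarrow> nat \<Rightarrow> nat"
    and G :: "('o, 'g) cat"
    and act :: "'g \<Rightarrow> 'l \<Rightarrow> 'l" and res :: "'g \<Rightarrow> 'l \<Rightarrow> 'g"
    and \<sigma> :: "'l \<times> 'g \<Rightarrow> 'l \<times> 'g \<Rightarrow> complex"
    and tG :: "'l \<times> 'g \<Rightarrow> 'a::cstar_algebra" and tL :: "'l \<times> 'g \<Rightarrow> 'b::cstar_algebra"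
    and sG :: "'l \<times> 'g \<Rightarrow> 'c::cstar_algebra" and sL :: "'l \<times> 'g \<Rightarrow> 'e::cstar_algebra"
  assumes kgraph: "is_kgraph (Suc k) \<Lambda> d"
    and fin_al: "finitely_aligned \<Lambda>"
    and grpd: "is_groupoid G"
    and objs: "cat_obj G = cat_obj \<Lambda>"
    and ss: "self_similar \<Lambda> G d act res"
    and cocycle: "two_cocycle (zs_product \<Lambda> G act res (cat_mor \<Lambda>)) \<sigma>"
    and univ_tG: "universal_toeplitz TYPE('b) (zs_product \<Lambda> G act res (gamma_part k \<Lambda> d)) \<sigma> tG"
    and univ_tL: "universal_toeplitz TYPE('a) (zs_product \<Lambda> G act res (cat_mor \<Lambda>)) \<sigma> tL"
  shows "(\<exists>!\<Phi> :: 'a \<Rightarrow> 'b. star_hom \<Phi> \<and>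
            (\<forall>x\<in>cat_mor (zs_product \<Lambda> G act res (gamma_part k \<Lambda> d)). \<Phi> (tG x) = tL x)) \<and>
         (locally_convex (Suc k) \<Lambda> d \<longrightarrow>
          universal_covariant TYPE('e) (zs_product \<Lambda> G act res (gamma_part k \<Lambda> d)) \<sigma> sG \<longrightarrow>
          universal_covariant TYPE('c) (zs_product \<Lambda> G act res (cat_mor \<Lambda>)) \<sigma> sL \<longrightarrow>
          (\<exists>\<Phi>b :: 'c \<Rightarrow> 'e. star_hom \<Phi>b \<and>
            (\<forall>x\<in>cat_mor (zs_product \<Lambda> G act res (gamma_part k \<Lambda> d)). \<Phi>b (sG x) = sL x)))"
proof -
  interpret self_similar_graph k \<Lambda> d G act res
    using kgraph grpd objs ss by unfold_locales
  have "twisted_rep (Z Gam) \<sigma> tL"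
    using univ_tL twisted_rep_gamma_restrict unfolding universal_toeplitz_def by blast
  then have toeplitz: "\<exists>!\<Phi> :: 'a \<Rightarrow> 'b. star_hom \<Phi> \<and> (\<forall>x\<in>cat_mor (Z Gam). \<Phi> (tG x) = tL x)"
    using univ_tG unfolding universal_toeplitz_def by blast
  have "\<exists>\<Phi> :: 'c \<Rightarrow> 'e. star_hom \<Phi> \<and> (\<forall>x\<in>cat_mor (Z Gam). \<Phi> (sG x) = sL x)"
    if lc: "locally_convex (Suc k) \<Lambda> d"
      and univ_sG: "universal_covariant TYPE('e) (Z Gam) \<sigma> sG"
      and univ_sL: "universal_covariant TYPE('c) (Z L) \<sigma> sL"
  proof -
    have "covariant_twisted_rep (Z Gam) \<sigma> sL"
      using univ_sL covariant_rep_gamma_restrict[OF lc] unfolding universal_covariant_def by blast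
    then show ?thesis using univ_sG unfolding universal_covariant_def by blast
  qed
  with toeplitz show ?thesis by blast
qed

end
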